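(* Let $\mathsf{X}\subset\mathbb{R}^p$, $\mathsf{Y}\subset\mathbb{R}^q$, let $\tilde s(x\mid\gamma)$ and $\tilde h(\gamma\mid x)$ be conditional pdfs on $\mathsf{X}$ and $\mathsf{Y}$ respectively, and let $\{\Psi_m\}$ be the Markov chain on $\mathsf{X}$ with transition density $k(x,x')=\int_{\mathsf{Y}}\tilde s(x'\mid\gamma)\tilde h(\gamma\mid x)d\gamma$ (transition function $K$, invariant probability $\Pi$) and $\{\tilde\Psi_m\}$ the Markov chain on $\mathsf{Y}$ with transition density $\tilde k(\gamma,\gamma')=\int_{\mathsf{X}}\tilde h(\gamma'\mid x)\tilde s(x\mid\gamma)dx$ (transition function $\tilde K$, invariant probability $\tilde\Pi$), both Harris ergodic. Suppose there is $R:\mathsf{Y}\times\mathbb{Z}_+\to(0,\infty)$ such that for every initial distribution $\tilde\nu$ of $\tilde\Psi_0$ and all $m\ge0$, $\|\tilde\nu\tilde K^m-\tilde\Pi\|_{TV}\le\mathbb{E}_{\tilde\nu}R(\tilde\Psi_0,m)$. Then for every initial distribution $\nu$ of $\Psi_0$ and all $m\ge1$, $\|\nu K^m-\Pi\|_{TV}\le\mathbb{E}_\nu\Big(\int_{\mathsf{Y}}R(\gamma,m-1)\tilde h(\gamma\mid\Psi_0)d\gamma\Big)$.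
   Context: $\nu K^m(\cdot)=\int K^m(x,\cdot)\nu(dx)$; $\|\cdot\|_{TV}$ is the total variation norm, taken as the $L^1$ distance between densities (the same convention on both sides). *)

theory Defs
  imports "HOL-Probability.Probability"
begin

text \<open>Total variation distance between two probability measures, normalised as the
  L1 distance between densities, i.e. twice the supremum over measurable sets.\<close>
definition tv :: "'a measure \<Rightarrow> 'a measure \<Rightarrow> real" where
  "tv \<mu> \<nu> = 2 * (SUP A \<in> sets \<mu>. \<bar>measure \<mu> A - measure \<nu> A\<bar>)"

definition kstep :: "'a::euclidean_space set \<Rightarrow> ('a \<Rightarrow> 'a \<Rightarrow> ennreal) \<Rightarrow> 'a measure \<Rightarrow> 'a measure" where
  "kstep S \<kappa> \<mu> = density lborel (\<lambda>x'. indicator S x' * (\<integral>\<^sup>+ x. \<kappa> x x' \<partial>\<mu>))"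

definition kiter :: "'a::euclidean_space set \<Rightarrow> ('a \<Rightarrow> 'a \<Rightarrow> ennreal) \<Rightarrow> nat \<Rightarrow> 'a measure \<Rightarrow> 'a measure" where
  "kiter S \<kappa> m \<mu> = (kstep S \<kappa> ^^ m) \<mu>"

text \<open>Harris ergodicity with invariant probability PiX, in its standard equivalent form
  (Meyn--Tweedie Thm 13.0.1): PiX is an invariant probability on S and
  \<delta>_x K^n \<rightarrow> PiX in total variation for every starting point x in S.\<close>
definition harris_ergodic :: "'a::euclidean_space set \<Rightarrow> ('a \<Rightarrow> 'a \<Rightarrow> ennreal) \<Rightarrow> 'a measure \<Rightarrow> bool" where
  "harris_ergodic S \<kappa> PiX \<longleftrightarrow>
     prob_space PiX \<and> sets PiX = sets borel \<and> measure PiX S = 1 \<and>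
     kstep S \<kappa> PiX = PiX \<and>
     (\<forall>x\<in>S. (\<lambda>n. tv (kiter S \<kappa> n (return borel x)) PiX) \<longlonglongrightarrow> 0)"

text \<open>s \<gamma> x = s~(x | \<gamma>),  h x \<gamma> = h~(\<gamma> | x).\<close>
definition kX :: "'b::euclidean_space set \<Rightarrow> ('b \<Rightarrow> 'a \<Rightarrow> real) \<Rightarrow> ('a \<Rightarrow> 'b \<Rightarrow> real) \<Rightarrow> 'a \<Rightarrow> 'a \<Rightarrow> ennreal" where
  "kX Y s h x x' = (\<integral>\<^sup>+ \<gamma>. indicator Y \<gamma> * ennreal (s \<gamma> x' * h x \<gamma>) \<partial>lborel)"

definition kY :: "'a::euclidean_space set \<Rightarrow> ('b \<Rightarrow> 'a \<Rightarrow> real) \<Rightarrow> ('a \<Rightarrow> 'b \<Rightarrow> real) \<Rightarrow> 'b \<Rightarrow> 'b \<Rightarrow> ennreal" where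
  "kY X s h \<gamma> \<gamma>' = (\<integral>\<^sup>+ x. indicator X x * ennreal (h x \<gamma>' * s \<gamma> x) \<partial>lborel)"

end

theory Submission
  imports Defs
begin

(* Both chains are assembled from the two conditional steps
     H nu = int h(. | x) nu(dx)   and   S mu = int s(. | gamma) mu(dgamma),
   namely K = S o H and K~ = H o S, so that nu K^m = S ((H nu) K~^(m-1)).  The measure S Pi~ is
   K-invariant, hence equal to Pi because a Harris ergodic chain has only one invariant
   probability, and Pi~ = H (S Pi~).  A Markov kernel does not increase total variation
   (for measures with Lebesgue densities this is the Hahn set {g1 > g2} argument), so
     ||nu K^m - Pi|| <= ||(H nu) K~^(m-1) - Pi~||,
   and the hypothesis on the conjugate chain started from H nu bounds the right-hand side by
   E_{H nu} R(., m-1), which by Tonelli is the claimed expectation under nu. *)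

section \<open>Kernels with Lebesgue densities\<close>

definition prob_on :: "'a::topological_space set \<Rightarrow> 'a measure \<Rightarrow> bool" where
  "prob_on S \<mu> \<longleftrightarrow> prob_space \<mu> \<and> sets \<mu> = sets borel \<and> measure \<mu> S = 1"

lemma prob_on_AE_in:
  assumes "prob_on S \<mu>" and "S \<in> sets borel"
  shows "AE x in \<mu>. x \<in> S"
  using assms prob_space.AE_in_set_eq_1[of \<mu> S] by (simp add: prob_on_def)

lemma prob_on_return: "x \<in> S \<Longrightarrow> S \<in> sets borel \<Longrightarrow> prob_on S (return borel x)"
  by (simp add: prob_on_def prob_space_return measure_def emeasure_return)

lemma sets_prob_on: "prob_on S \<mu> \<Longrightarrow> sets \<mu> = sets borel"
  by (simp add: prob_on_def)

lemma prob_on_sigma_finite: "prob_on S \<mu> \<Longrightarrow> sigma_finite_measure \<mu>"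
  by (simp add: prob_on_def prob_space_imp_sigma_finite)

definition kapply :: "'b::euclidean_space set \<Rightarrow> ('a \<Rightarrow> 'b \<Rightarrow> ennreal) \<Rightarrow> 'a measure \<Rightarrow> 'b measure" where
  "kapply T \<kappa> \<mu> = density lborel (\<lambda>y. indicator T y * (\<integral>\<^sup>+ x. \<kappa> x y \<partial>\<mu>))"

definition kcomp ::
    "'b::euclidean_space set \<Rightarrow> ('a \<Rightarrow> 'b \<Rightarrow> ennreal) \<Rightarrow> ('b \<Rightarrow> 'c \<Rightarrow> ennreal) \<Rightarrow> 'a \<Rightarrow> 'c \<Rightarrow> ennreal"
  where
  "kcomp U \<kappa>\<^sub>1 \<kappa>\<^sub>2 x z = (\<integral>\<^sup>+ y. indicator U y * \<kappa>\<^sub>1 x y * \<kappa>\<^sub>2 y z \<partial>lborel)"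

lemma kstep_eq_kapply: "kstep S \<kappa> = kapply S \<kappa>"
  unfolding kstep_def kapply_def ..

lemma sets_kapply [simp]: "sets (kapply T \<kappa> \<mu>) = sets borel"
  by (simp add: kapply_def)

lemma sets_kiter [simp]: "sets \<mu> = sets borel \<Longrightarrow> sets (kiter S \<kappa> n \<mu>) = sets borel"
  by (induction n) (simp_all add: kiter_def kstep_eq_kapply)

lemma borel_measurable_kapply_density:
  fixes \<kappa> :: "'a::euclidean_space \<Rightarrow> 'b::euclidean_space \<Rightarrow> ennreal"
  assumes [measurable]: "case_prod \<kappa> \<in> borel_measurable (borel \<Otimes>\<^sub>M borel)" "T \<in> sets borel"
    and [measurable_cong]: "sets \<mu> = sets borel" and "sigma_finite_measure \<mu>"
  shows "(\<lambda>y. indicator T y * (\<integral>\<^sup>+ x. \<kappa> x y \<partial>\<mu>)) \<in> borel_measurable borel"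
proof -
  interpret sigma_finite_measure \<mu> by fact
  show ?thesis by measurable
qed

lemma nn_integral_kapply:
  fixes \<kappa> :: "'a::euclidean_space \<Rightarrow> 'b::euclidean_space \<Rightarrow> ennreal"
  assumes [measurable]: "case_prod \<kappa> \<in> borel_measurable (borel \<Otimes>\<^sub>M borel)" "T \<in> sets borel"
      "g \<in> borel_measurable borel"
    and [measurable_cong]: "sets \<mu> = sets borel" and "sigma_finite_measure \<mu>"
  shows "(\<integral>\<^sup>+ y. g y \<partial>kapply T \<kappa> \<mu>) = (\<integral>\<^sup>+ x. (\<integral>\<^sup>+ y. indicator T y * \<kappa> x y * g y \<partial>lborel) \<partial>\<mu>)"
proof -
  interpret pair_sigma_finite \<mu> lborel
    by (simp add: pair_sigma_finite_def assms(5) lborel.sigma_finite_measure_axioms)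
  have "(\<integral>\<^sup>+ y. g y \<partial>kapply T \<kappa> \<mu>) = (\<integral>\<^sup>+ y. (indicator T y * (\<integral>\<^sup>+ x. \<kappa> x y \<partial>\<mu>)) * g y \<partial>lborel)"
    unfolding kapply_def
    using borel_measurable_kapply_density[OF assms(1,2,4,5)] by (intro nn_integral_density) auto
  also have "\<dots> = (\<integral>\<^sup>+ y. (\<integral>\<^sup>+ x. indicator T y * \<kappa> x y * g y \<partial>\<mu>) \<partial>lborel)"
    by (intro nn_integral_cong) (simp add: nn_integral_cmult nn_integral_multc)
  also have "\<dots> = (\<integral>\<^sup>+ x. (\<integral>\<^sup>+ y. indicator T y * \<kappa> x y * g y \<partial>lborel) \<partial>\<mu>)"
    by (intro Fubini') measurable
  finally show ?thesis .
qed

lemma prob_on_kapply: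
  fixes \<kappa> :: "'a::euclidean_space \<Rightarrow> 'b::euclidean_space \<Rightarrow> ennreal"
  assumes \<mu>: "prob_on S \<mu>" and S: "S \<in> sets borel" and T: "T \<in> sets borel"
    and \<kappa>: "case_prod \<kappa> \<in> borel_measurable (borel \<Otimes>\<^sub>M borel)"
    and pdf: "\<And>x. x \<in> S \<Longrightarrow> (\<integral>\<^sup>+ y. indicator T y * \<kappa> x y \<partial>lborel) = 1"
  shows "prob_on T (kapply T \<kappa> \<mu>)"
proof -
  interpret prob_space \<mu> using \<mu> by (simp add: prob_on_def)
  have "emeasure (kapply T \<kappa> \<mu>) A = 1" if "T \<subseteq> A" "A \<in> sets borel" for A
  proof -
    have "emeasure (kapply T \<kappa> \<mu>) A = (\<integral>\<^sup>+ y. indicator A y \<partial>kapply T \<kappa> \<mu>)"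
      using that by simp
    also have "\<dots> = (\<integral>\<^sup>+ x. (\<integral>\<^sup>+ y. indicator T y * \<kappa> x y * indicator A y \<partial>lborel) \<partial>\<mu>)"
      using \<mu> T \<kappa> that by (intro nn_integral_kapply) (auto simp: prob_on_def prob_on_sigma_finite)
    also have "\<dots> = (\<integral>\<^sup>+ x. 1 \<partial>\<mu>)"
    proof (intro nn_integral_cong_AE, use prob_on_AE_in[OF \<mu> S] in eventually_elim)
      case (elim x)
      have "(\<integral>\<^sup>+ y. indicator T y * \<kappa> x y * indicator A y \<partial>lborel)
          = (\<integral>\<^sup>+ y. indicator T y * \<kappa> x y \<partial>lborel)"
        using \<open>T \<subseteq> A\<close> by (intro nn_integral_cong) (auto split: split_indicator)
      then show ?case using pdf[OF elim] by simp
    qed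
    finally show ?thesis by (simp add: emeasure_space_1)
  qed
  from this[of UNIV] this[OF order_refl T] show ?thesis
    by (auto simp: prob_on_def kapply_def intro!: prob_spaceI measure_eq_emeasure_eq_ennreal)
qed

lemma kapply_kapply:
  fixes \<kappa>\<^sub>1 :: "'a::euclidean_space \<Rightarrow> 'b::euclidean_space \<Rightarrow> ennreal"
    and \<kappa>\<^sub>2 :: "'b \<Rightarrow> 'c::euclidean_space \<Rightarrow> ennreal"
  assumes [measurable]: "case_prod \<kappa>\<^sub>1 \<in> borel_measurable (borel \<Otimes>\<^sub>M borel)"
      "case_prod \<kappa>\<^sub>2 \<in> borel_measurable (borel \<Otimes>\<^sub>M borel)" "U \<in> sets borel"
    and "sets \<mu> = sets borel" and "sigma_finite_measure \<mu>"
  shows "kapply T \<kappa>\<^sub>2 (kapply U \<kappa>\<^sub>1 \<mu>) = kapply T (kcomp U \<kappa>\<^sub>1 \<kappa>\<^sub>2) \<mu>"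
proof -
  have "(\<integral>\<^sup>+ y. \<kappa>\<^sub>2 y z \<partial>kapply U \<kappa>\<^sub>1 \<mu>) = (\<integral>\<^sup>+ x. kcomp U \<kappa>\<^sub>1 \<kappa>\<^sub>2 x z \<partial>\<mu>)" for z
    unfolding kcomp_def using assms(4,5) by (intro nn_integral_kapply) measurable
  then show ?thesis by (simp add: kapply_def)
qed

lemma borel_measurable_kcomp:
  fixes \<kappa>\<^sub>1 :: "'a::euclidean_space \<Rightarrow> 'b::euclidean_space \<Rightarrow> ennreal"
    and \<kappa>\<^sub>2 :: "'b \<Rightarrow> 'c::euclidean_space \<Rightarrow> ennreal"
  assumes [measurable]: "case_prod \<kappa>\<^sub>1 \<in> borel_measurable (borel \<Otimes>\<^sub>M borel)"
      "case_prod \<kappa>\<^sub>2 \<in> borel_measurable (borel \<Otimes>\<^sub>M borel)" "U \<in> sets borel"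
  shows "case_prod (kcomp U \<kappa>\<^sub>1 \<kappa>\<^sub>2) \<in> borel_measurable (borel \<Otimes>\<^sub>M borel)"
  unfolding kcomp_def by measurable

section \<open>Total variation\<close>

lemma tv_commute: "sets \<mu> = sets \<nu> \<Longrightarrow> tv \<mu> \<nu> = tv \<nu> \<mu>"
  by (simp add: tv_def abs_minus_commute)

lemma abs_measure_diff_le_tv:
  assumes "prob_space \<mu>" "prob_space \<nu>" and "A \<in> sets \<mu>"
  shows "\<bar>measure \<mu> A - measure \<nu> A\<bar> \<le> tv \<mu> \<nu> / 2"
proof -
  have "\<bar>measure \<mu> B - measure \<nu> B\<bar> \<le> 1" for B
    using prob_space.prob_le_1[OF assms(1), of B] prob_space.prob_le_1[OF assms(2), of B]
      measure_nonneg[of \<mu> B] measure_nonneg[of \<nu> B] by linarith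
  then have "\<bar>measure \<mu> A - measure \<nu> A\<bar> \<le> (SUP B \<in> sets \<mu>. \<bar>measure \<mu> B - measure \<nu> B\<bar>)"
    by (intro cSUP_upper[OF assms(3)] bdd_aboveI2)
  then show ?thesis by (simp add: tv_def)
qed

lemma tv_le:
  assumes "\<And>A. A \<in> sets \<mu> \<Longrightarrow> \<bar>measure \<mu> A - measure \<nu> A\<bar> \<le> c / 2"
  shows "tv \<mu> \<nu> \<le> c"
proof -
  have "(SUP A \<in> sets \<mu>. \<bar>measure \<mu> A - measure \<nu> A\<bar>) \<le> c / 2"
    using assms sets.empty_sets by (intro cSUP_least) blast+
  then show ?thesis by (simp add: tv_def)
qed

lemma emeasure_tendsto_of_tv_tendsto:
  assumes "\<And>n. prob_space (\<mu> n)" "prob_space \<nu>" and "\<And>n. A \<in> sets (\<mu> n)"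
    and "(\<lambda>n. tv (\<mu> n) \<nu>) \<longlonglongrightarrow> 0"
  shows "(\<lambda>n. emeasure (\<mu> n) A) \<longlonglongrightarrow> emeasure \<nu> A"
proof -
  have "(\<lambda>n. measure (\<mu> n) A - measure \<nu> A) \<longlonglongrightarrow> 0"
  proof (rule Lim_null_comparison)
    show "\<forall>\<^sub>F n in sequentially. norm (measure (\<mu> n) A - measure \<nu> A) \<le> tv (\<mu> n) \<nu> / 2"
      using abs_measure_diff_le_tv[OF assms(1,2,3)] by (intro always_eventually allI) simp
    show "(\<lambda>n. tv (\<mu> n) \<nu> / 2) \<longlonglongrightarrow> 0"
      using tendsto_divide_zero[OF assms(4), of 2] by simp
  qed
  then have "(\<lambda>n. ennreal (measure (\<mu> n) A)) \<longlonglongrightarrow> ennreal (measure \<nu> A)"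
    by (intro tendsto_ennrealI) (simp add: LIM_zero_iff)
  then show ?thesis
    using assms(1,2) by (simp add: finite_measure.emeasure_eq_measure prob_space_def)
qed

lemma enn2real_diff_le_excess:
  fixes a b c d e :: ennreal
  assumes "a \<le> b + e" "c = d + e" "b < \<infinity>" "c < \<infinity>"
  shows "enn2real a - enn2real b \<le> enn2real c - enn2real d"
proof -
  obtain rb rd re where "b = ennreal rb" "d = ennreal rd" "e = ennreal re"
    and "rb \<ge> 0" "rd \<ge> 0" "re \<ge> 0"
    using assms(2-4) by (cases b; cases d; cases e) auto
  then show ?thesis
    using assms(1,2) enn2real_leI[of "rb + re" a]
    by (simp add: ennreal_plus[symmetric] del: ennreal_plus)
qed

lemma nn_integral_density_diff_le_tv:
  fixes g\<^sub>1 g\<^sub>2 f :: "'a \<Rightarrow> ennreal"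
  assumes [measurable]: "g\<^sub>1 \<in> borel_measurable M" "g\<^sub>2 \<in> borel_measurable M" "f \<in> borel_measurable M"
    and f_le_1: "\<And>x. f x \<le> 1"
    and prob: "prob_space (density M g\<^sub>1)" "prob_space (density M g\<^sub>2)"
  shows "enn2real (\<integral>\<^sup>+ x. f x \<partial>density M g\<^sub>1) - enn2real (\<integral>\<^sup>+ x. f x \<partial>density M g\<^sub>2)
    \<le> tv (density M g\<^sub>1) (density M g\<^sub>2) / 2"
proof -
  \<comment> \<open>Hahn decomposition: the excess of the first density is carried by \<open>B\<close>.\<close>
  define B where "B = {x \<in> space M. g\<^sub>2 x < g\<^sub>1 x}"
  define d where "d x = indicator B x * (g\<^sub>1 x - g\<^sub>2 x)" for x
  have [measurable]: "B \<in> sets M"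
    unfolding B_def by measurable
  have [measurable]: "d \<in> borel_measurable M"
    unfolding d_def by measurable
  have "g\<^sub>1 x * f x \<le> g\<^sub>2 x * f x + d x" if "x \<in> space M" for x
  proof (cases "x \<in> B")
    case True
    then have "g\<^sub>1 x * f x = g\<^sub>2 x * f x + (g\<^sub>1 x - g\<^sub>2 x) * f x"
      by (simp add: B_def distrib_right[symmetric] add_diff_inverse_ennreal less_imp_le)
    also have "\<dots> \<le> g\<^sub>2 x * f x + d x"
      using True mult_left_mono[OF f_le_1, of "g\<^sub>1 x - g\<^sub>2 x"] by (simp add: d_def add_left_mono)
    finally show ?thesis .
  next
    case False
    with that show ?thesis
      by (auto simp: B_def d_def not_less intro: mult_right_mono)
  qed
  then have le: "(\<integral>\<^sup>+ x. g\<^sub>1 x * f x \<partial>M) \<le> (\<integral>\<^sup>+ x. g\<^sub>2 x * f x \<partial>M) + (\<integral>\<^sup>+ x. d x \<partial>M)"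
    by (subst nn_integral_add[symmetric]) (auto intro!: nn_integral_mono)
  have "g\<^sub>1 x * indicator B x = g\<^sub>2 x * indicator B x + d x" for x
    by (cases "x \<in> B") (simp_all add: B_def d_def add_diff_inverse_ennreal less_imp_le)
  then have eq: "emeasure (density M g\<^sub>1) B = emeasure (density M g\<^sub>2) B + (\<integral>\<^sup>+ x. d x \<partial>M)"
    by (simp add: emeasure_density nn_integral_add[symmetric] d_def)
  have fin_B: "emeasure (density M g\<^sub>1) B < \<infinity>"
    using prob(1) by (simp add: prob_space_def finite_measure.emeasure_finite less_top[symmetric])
  have f_le: "(\<integral>\<^sup>+ x. g\<^sub>2 x * f x \<partial>M) \<le> emeasure (density M g\<^sub>2) (space M)"
    using mult_left_mono[OF f_le_1] by (simp add: emeasure_density nn_integral_mono)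
  have fin_f: "(\<integral>\<^sup>+ x. g\<^sub>2 x * f x \<partial>M) < \<infinity>"
    unfolding infinity_ennreal_def less_top[symmetric] using prob(2)
    by (intro neq_top_trans[OF _ f_le]) (simp add: prob_space_def finite_measure.emeasure_finite)
  have "enn2real (\<integral>\<^sup>+ x. g\<^sub>1 x * f x \<partial>M) - enn2real (\<integral>\<^sup>+ x. g\<^sub>2 x * f x \<partial>M)
      \<le> measure (density M g\<^sub>1) B - measure (density M g\<^sub>2) B"
    unfolding measure_def by (rule enn2real_diff_le_excess[OF le eq fin_f fin_B])
  also have "\<dots> \<le> tv (density M g\<^sub>1) (density M g\<^sub>2) / 2"
    by (intro order_trans[OF abs_ge_self abs_measure_diff_le_tv[OF prob]]) simp
  finally show ?thesis
    by (simp add: nn_integral_density)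
qed

lemma tv_kapply_density_le:
  fixes \<kappa> :: "'a::euclidean_space \<Rightarrow> 'b::euclidean_space \<Rightarrow> ennreal"
  assumes [measurable]: "case_prod \<kappa> \<in> borel_measurable (borel \<Otimes>\<^sub>M borel)"
      "S \<in> sets borel" "T \<in> sets borel"
    and pdf: "\<And>x. x \<in> S \<Longrightarrow> (\<integral>\<^sup>+ y. indicator T y * \<kappa> x y \<partial>lborel) = 1"
    and [measurable]: "g\<^sub>1 \<in> borel_measurable borel" "g\<^sub>2 \<in> borel_measurable borel"
    and on_S: "prob_on S (density lborel g\<^sub>1)" "prob_on S (density lborel g\<^sub>2)"
  shows "tv (kapply T \<kappa> (density lborel g\<^sub>1)) (kapply T \<kappa> (density lborel g\<^sub>2))
    \<le> tv (density lborel g\<^sub>1) (density lborel g\<^sub>2)"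
proof (rule tv_le)
  fix A assume "A \<in> sets (kapply T \<kappa> (density lborel g\<^sub>1))"
  then have [measurable]: "A \<in> sets borel" by simp
  define f where
    "f x = indicator S x * (\<integral>\<^sup>+ y. indicator T y * \<kappa> x y * indicator A y \<partial>lborel)" for x
  have [measurable]: "f \<in> borel_measurable borel"
    unfolding f_def by measurable
  have f_le_1: "f x \<le> 1" for x
  proof (cases "x \<in> S")
    case True
    have "f x \<le> (\<integral>\<^sup>+ y. indicator T y * \<kappa> x y \<partial>lborel)"
      unfolding f_def using True by (simp add: nn_integral_mono split: split_indicator)
    then show ?thesis using pdf[OF True] by simp
  qed (simp add: f_def)
  have measure_eq: "measure (kapply T \<kappa> \<mu>) A = enn2real (\<integral>\<^sup>+ x. f x \<partial>\<mu>)" if \<mu>: "prob_on S \<mu>" for \<mu>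
  proof -
    have "emeasure (kapply T \<kappa> \<mu>) A = (\<integral>\<^sup>+ y. indicator A y \<partial>kapply T \<kappa> \<mu>)"
      by simp
    also have "\<dots> = (\<integral>\<^sup>+ x. (\<integral>\<^sup>+ y. indicator T y * \<kappa> x y * indicator A y \<partial>lborel) \<partial>\<mu>)"
      using sets_prob_on[OF \<mu>] prob_on_sigma_finite[OF \<mu>] by (intro nn_integral_kapply) measurable
    also have "\<dots> = (\<integral>\<^sup>+ x. f x \<partial>\<mu>)"
      using prob_on_AE_in[OF \<mu>] by (intro nn_integral_cong_AE) (auto simp: f_def)
    finally show ?thesis by (simp add: measure_def)
  qed
  have tv_sym:
    "tv (density lborel g\<^sub>1) (density lborel g\<^sub>2) = tv (density lborel g\<^sub>2) (density lborel g\<^sub>1)"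
    by (rule tv_commute) simp
  have prob: "prob_space (density lborel g\<^sub>1)" "prob_space (density lborel g\<^sub>2)"
    using on_S by (simp_all add: prob_on_def)
  have "measure (kapply T \<kappa> (density lborel g\<^sub>1)) A
      - measure (kapply T \<kappa> (density lborel g\<^sub>2)) A \<le> tv (density lborel g\<^sub>1) (density lborel g\<^sub>2) / 2"
    unfolding measure_eq[OF on_S(1)] measure_eq[OF on_S(2)]
    by (rule nn_integral_density_diff_le_tv) (use prob f_le_1 in auto)
  moreover have "measure (kapply T \<kappa> (density lborel g\<^sub>2)) A
      - measure (kapply T \<kappa> (density lborel g\<^sub>1)) A \<le> tv (density lborel g\<^sub>1) (density lborel g\<^sub>2) / 2"
    unfolding measure_eq[OF on_S(1)] measure_eq[OF on_S(2)] tv_sym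
    by (rule nn_integral_density_diff_le_tv) (use prob f_le_1 in auto)
  ultimately show "\<bar>measure (kapply T \<kappa> (density lborel g\<^sub>1)) A
      - measure (kapply T \<kappa> (density lborel g\<^sub>2)) A\<bar> \<le> tv (density lborel g\<^sub>1) (density lborel g\<^sub>2) / 2"
    by linarith
qed

section \<open>Harris ergodic chains\<close>

lemma kiter_0 [simp]: "kiter S \<kappa> 0 \<mu> = \<mu>"
  by (simp add: kiter_def)

lemma kiter_Suc: "kiter S \<kappa> (Suc n) \<mu> = kstep S \<kappa> (kiter S \<kappa> n \<mu>)"
  by (simp add: kiter_def)

lemma prob_on_kiter:
  assumes "\<And>\<mu>. prob_on S \<mu> \<Longrightarrow> prob_on S (kstep S \<kappa> \<mu>)" and "prob_on S \<mu>"
  shows "prob_on S (kiter S \<kappa> n \<mu>)"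
  by (induction n) (simp_all add: kiter_Suc assms)

lemma nn_integral_kiter_disintegration:
  fixes \<kappa> :: "'a::euclidean_space \<Rightarrow> 'a \<Rightarrow> ennreal"
  assumes [measurable]: "S \<in> sets borel" "case_prod \<kappa> \<in> borel_measurable (borel \<Otimes>\<^sub>M borel)"
    and markov: "\<And>\<mu>. prob_on S \<mu> \<Longrightarrow> prob_on S (kstep S \<kappa> \<mu>)"
    and "g \<in> borel_measurable borel"
  shows "(\<lambda>x. indicator S x * (\<integral>\<^sup>+ y. g y \<partial>kiter S \<kappa> n (return borel x))) \<in> borel_measurable borel \<and>
    (\<forall>\<mu>. prob_on S \<mu> \<longrightarrow>
      (\<integral>\<^sup>+ y. g y \<partial>kiter S \<kappa> n \<mu>)
        = (\<integral>\<^sup>+ x. indicator S x * (\<integral>\<^sup>+ y. g y \<partial>kiter S \<kappa> n (return borel x)) \<partial>\<mu>))"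
  using assms(4)
proof (induction n arbitrary: g)
  case 0
  then have [measurable]: "g \<in> borel_measurable borel" .
  have "(\<integral>\<^sup>+ y. g y \<partial>\<mu>) = (\<integral>\<^sup>+ x. indicator S x * g x \<partial>\<mu>)" if "prob_on S \<mu>" for \<mu>
    using prob_on_AE_in[OF that] by (intro nn_integral_cong_AE) auto
  then show ?case
    by (simp add: nn_integral_return)
next
  case (Suc n)
  note [measurable] = Suc.prems
  define G where "G x = (\<integral>\<^sup>+ y. indicator S y * \<kappa> x y * g y \<partial>lborel)" for x
  have [measurable]: "G \<in> borel_measurable borel"
    unfolding G_def by measurable
  have step: "(\<integral>\<^sup>+ y. g y \<partial>kiter S \<kappa> (Suc n) \<mu>) = (\<integral>\<^sup>+ y. G y \<partial>kiter S \<kappa> n \<mu>)"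
    if "prob_on S \<mu>" for \<mu>
    using prob_on_kiter[OF markov that, of n]
    unfolding kiter_Suc kstep_eq_kapply G_def
    by (intro nn_integral_kapply) (auto simp: sets_prob_on prob_on_sigma_finite)
  have "(\<lambda>x. indicator S x * (\<integral>\<^sup>+ y. g y \<partial>kiter S \<kappa> (Suc n) (return borel x)))
      = (\<lambda>x. indicator S x * (\<integral>\<^sup>+ y. G y \<partial>kiter S \<kappa> n (return borel x)))"
    by (auto simp: step prob_on_return split: split_indicator)
  then show ?case
    using Suc.IH[of G] by (simp add: step)
qed

lemma kiter_invariant: "kstep S \<kappa> \<rho> = \<rho> \<Longrightarrow> kiter S \<kappa> n \<rho> = \<rho>"
  by (induction n) (simp_all add: kiter_Suc)

lemma harris_ergodic_emeasure_tendsto: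
  assumes markov: "\<And>\<mu>. prob_on S \<mu> \<Longrightarrow> prob_on S (kstep S \<kappa> \<mu>)"
    and harris: "harris_ergodic S \<kappa> \<pi>"
    and "S \<in> sets borel" "x \<in> S" "A \<in> sets borel"
  shows "(\<lambda>n. emeasure (kiter S \<kappa> n (return borel x)) A) \<longlonglongrightarrow> emeasure \<pi> A"
proof (rule emeasure_tendsto_of_tv_tendsto)
  show "(\<lambda>n. tv (kiter S \<kappa> n (return borel x)) \<pi>) \<longlonglongrightarrow> 0"
    using harris \<open>x \<in> S\<close> by (simp add: harris_ergodic_def)
qed (use assms prob_on_kiter[OF markov prob_on_return] in
      \<open>simp_all add: harris_ergodic_def prob_on_def\<close>)

lemma harris_ergodic_invariant_unique:
  fixes \<kappa> :: "'a::euclidean_space \<Rightarrow> 'a \<Rightarrow> ennreal"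
  assumes [measurable]: "S \<in> sets borel" "case_prod \<kappa> \<in> borel_measurable (borel \<Otimes>\<^sub>M borel)"
    and markov: "\<And>\<mu>. prob_on S \<mu> \<Longrightarrow> prob_on S (kstep S \<kappa> \<mu>)"
    and harris: "harris_ergodic S \<kappa> \<pi>"
    and \<rho>: "prob_on S \<rho>" and invariant: "kstep S \<kappa> \<rho> = \<rho>"
  shows "\<rho> = \<pi>"
proof (rule measure_eqI)
  interpret \<rho>: prob_space \<rho>
    using \<rho> by (simp add: prob_on_def)
  have sets_\<rho> [measurable_cong]: "sets \<rho> = sets borel"
    using \<rho> by (simp add: sets_prob_on)
  then show "sets \<rho> = sets \<pi>"
    using harris by (simp add: harris_ergodic_def)
  fix A assume "A \<in> sets \<rho>"
  then have [measurable]: "A \<in> sets borel"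
    using sets_\<rho> by simp
  define u where "u n x = indicator S x * emeasure (kiter S \<kappa> n (return borel x)) A" for n x
  have "u n = (\<lambda>x. indicator S x * (\<integral>\<^sup>+ y. indicator A y \<partial>kiter S \<kappa> n (return borel x)))" for n
    by (simp add: u_def fun_eq_iff)
  then have u_disint: "u n \<in> borel_measurable borel \<and>
      (\<forall>\<mu>. prob_on S \<mu> \<longrightarrow> emeasure (kiter S \<kappa> n \<mu>) A = (\<integral>\<^sup>+ x. u n x \<partial>\<mu>))" for n
    using nn_integral_kiter_disintegration[OF assms(1-3), of "indicator A" n]
    by (simp add: sets_prob_on)
  have [measurable]: "u n \<in> borel_measurable borel" for n
    using u_disint by blast
  \<comment> \<open>\<open>\<rho>(A) = \<integral> K\<^sup>n(x, A) \<rho>(dx)\<close> for every \<open>n\<close>, and the integrands converge to \<open>\<pi>(A)\<close> on \<open>S\<close>.\<close>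
  have const: "emeasure \<rho> A = (\<integral>\<^sup>+ x. u n x \<partial>\<rho>)" for n
    using u_disint \<rho> kiter_invariant[OF invariant] by metis
  have "(\<lambda>n. \<integral>\<^sup>+ x. u n x \<partial>\<rho>) \<longlonglongrightarrow> (\<integral>\<^sup>+ x. indicator S x * emeasure \<pi> A \<partial>\<rho>)"
  proof (rule nn_integral_dominated_convergence[where w="\<lambda>_. 1"])
    show "AE x in \<rho>. u n x \<le> 1" for n
      using prob_on_kiter[OF markov prob_on_return]
      by (intro AE_I2)
        (auto simp: u_def prob_on_def prob_space.emeasure_le_1 split: split_indicator)
    show "AE x in \<rho>. (\<lambda>n. u n x) \<longlonglongrightarrow> indicator S x * emeasure \<pi> A"
      using harris_ergodic_emeasure_tendsto[OF markov harris]
      by (intro AE_I2) (simp add: u_def indicator_def)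
  qed (simp_all add: \<rho>.emeasure_space_1)
  then have "emeasure \<rho> A = (\<integral>\<^sup>+ x. indicator S x * emeasure \<pi> A \<partial>\<rho>)"
    unfolding const[symmetric] LIMSEQ_const_iff .
  also have "\<dots> = emeasure \<pi> A * emeasure \<rho> S"
    by (subst mult.commute) (simp add: nn_integral_cmult_indicator)
  also have "emeasure \<rho> S = 1"
    using \<rho> by (simp add: prob_on_def \<rho>.emeasure_eq_measure)
  finally show "emeasure \<rho> A = emeasure \<pi> A"
    by simp
qed

section \<open>The two-block chain and its conjugate\<close>

locale data_augmentation =
  fixes X :: "'a::euclidean_space set" and Y :: "'b::euclidean_space set"
    and s :: "'b \<Rightarrow> 'a \<Rightarrow> real" and h :: "'a \<Rightarrow> 'b \<Rightarrow> real"
  assumes X: "X \<in> sets borel" and Y: "Y \<in> sets borel"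
    and s_meas: "(\<lambda>(\<gamma>, x). s \<gamma> x) \<in> borel_measurable borel"
    and h_meas: "(\<lambda>(x, \<gamma>). h x \<gamma>) \<in> borel_measurable borel"
    and s_nonneg: "\<And>\<gamma> x. s \<gamma> x \<ge> 0" and h_nonneg: "\<And>x \<gamma>. h x \<gamma> \<ge> 0"
    and s_pdf: "\<And>\<gamma>. \<gamma> \<in> Y \<Longrightarrow> (\<integral>\<^sup>+ x. indicator X x * ennreal (s \<gamma> x) \<partial>lborel) = 1"
    and h_pdf: "\<And>x. x \<in> X \<Longrightarrow> (\<integral>\<^sup>+ \<gamma>. indicator Y \<gamma> * ennreal (h x \<gamma>) \<partial>lborel) = 1"
begin

abbreviation Sstep :: "'b measure \<Rightarrow> 'a measure" where
  "Sstep \<equiv> kapply X (\<lambda>\<gamma> x. ennreal (s \<gamma> x))"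

abbreviation Hstep :: "'a measure \<Rightarrow> 'b measure" where
  "Hstep \<equiv> kapply Y (\<lambda>x \<gamma>. ennreal (h x \<gamma>))"

lemmas [measurable] = X Y

lemma s_measurable [measurable]: "(\<lambda>(\<gamma>, x). ennreal (s \<gamma> x)) \<in> borel_measurable (borel \<Otimes>\<^sub>M borel)"
  using measurable_compose[OF s_meas measurable_ennreal] by (simp add: borel_prod case_prod_beta')

lemma h_measurable [measurable]: "(\<lambda>(x, \<gamma>). ennreal (h x \<gamma>)) \<in> borel_measurable (borel \<Otimes>\<^sub>M borel)"
  using measurable_compose[OF h_meas measurable_ennreal] by (simp add: borel_prod case_prod_beta')

lemma prob_on_Hstep: "prob_on X \<nu> \<Longrightarrow> prob_on Y (Hstep \<nu>)"
  by (rule prob_on_kapply[OF _ X Y h_measurable h_pdf])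

lemma prob_on_Sstep: "prob_on Y \<mu> \<Longrightarrow> prob_on X (Sstep \<mu>)"
  by (rule prob_on_kapply[OF _ Y X s_measurable s_pdf])

lemma kX_eq_kcomp: "kX Y s h = kcomp Y (\<lambda>x \<gamma>. ennreal (h x \<gamma>)) (\<lambda>\<gamma> x. ennreal (s \<gamma> x))"
  by (simp add: fun_eq_iff kX_def kcomp_def ennreal_mult s_nonneg h_nonneg mult_ac)

lemma kY_eq_kcomp: "kY X s h = kcomp X (\<lambda>\<gamma> x. ennreal (s \<gamma> x)) (\<lambda>x \<gamma>. ennreal (h x \<gamma>))"
  by (simp add: fun_eq_iff kY_def kcomp_def ennreal_mult s_nonneg h_nonneg mult_ac)

lemma kstep_X: "prob_on X \<nu> \<Longrightarrow> kstep X (kX Y s h) \<nu> = Sstep (Hstep \<nu>)"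
  unfolding kstep_eq_kapply kX_eq_kcomp
  by (intro kapply_kapply[symmetric]) (simp_all add: sets_prob_on prob_on_sigma_finite)

lemma kstep_Y: "prob_on Y \<mu> \<Longrightarrow> kstep Y (kY X s h) \<mu> = Hstep (Sstep \<mu>)"
  unfolding kstep_eq_kapply kY_eq_kcomp
  by (intro kapply_kapply[symmetric]) (simp_all add: sets_prob_on prob_on_sigma_finite)

lemma prob_on_kstep_X: "prob_on X \<nu> \<Longrightarrow> prob_on X (kstep X (kX Y s h) \<nu>)"
  by (simp add: kstep_X prob_on_Hstep prob_on_Sstep)

lemma kiter_Y_Hstep:
  assumes \<nu>: "prob_on X \<nu>"
  shows "kiter Y (kY X s h) n (Hstep \<nu>) = Hstep (kiter X (kX Y s h) n \<nu>)"
proof (induction n)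
  case (Suc n)
  have "prob_on X (kiter X (kX Y s h) n \<nu>)"
    by (rule prob_on_kiter[OF prob_on_kstep_X \<nu>])
  then show ?case
    by (simp add: kiter_Suc Suc.IH kstep_X kstep_Y prob_on_Hstep)
qed simp

lemma invariant_X_eq_Sstep:
  assumes "harris_ergodic X (kX Y s h) PiX" and "harris_ergodic Y (kY X s h) PiY"
  shows "PiX = Sstep PiY"
proof -
  have PiY: "prob_on Y PiY" "kstep Y (kY X s h) PiY = PiY"
    using assms(2) by (simp_all add: harris_ergodic_def prob_on_def)
  have "Sstep PiY = PiX"
  proof (rule harris_ergodic_invariant_unique[OF X _ prob_on_kstep_X assms(1)])
    show "case_prod (kX Y s h) \<in> borel_measurable (borel \<Otimes>\<^sub>M borel)"
      unfolding kX_eq_kcomp by (intro borel_measurable_kcomp) simp_all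
    show "prob_on X (Sstep PiY)"
      by (rule prob_on_Sstep[OF PiY(1)])
    show "kstep X (kX Y s h) (Sstep PiY) = Sstep PiY"
      using PiY by (simp add: kstep_X prob_on_Sstep kstep_Y[symmetric])
  qed
  then show ?thesis ..
qed

lemma tv_Sstep_Hstep_le:
  assumes "prob_on X \<rho>\<^sub>1" "prob_on X \<rho>\<^sub>2"
  shows "tv (Sstep (Hstep \<rho>\<^sub>1)) (Sstep (Hstep \<rho>\<^sub>2)) \<le> tv (Hstep \<rho>\<^sub>1) (Hstep \<rho>\<^sub>2)"
  using prob_on_Hstep[OF assms(1)] prob_on_Hstep[OF assms(2)] unfolding kapply_def[of Y]
  by (intro tv_kapply_density_le borel_measurable_kapply_density)
    (simp_all add: s_pdf sets_prob_on[OF assms(1)] sets_prob_on[OF assms(2)]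
      prob_on_sigma_finite[OF assms(1)] prob_on_sigma_finite[OF assms(2)])

lemma tv_kiter_X_le_tv_kiter_Y:
  assumes "harris_ergodic X (kX Y s h) PiX" and "harris_ergodic Y (kY X s h) PiY"
    and \<nu>: "prob_on X \<nu>"
  shows "tv (kiter X (kX Y s h) (Suc n) \<nu>) PiX \<le> tv (kiter Y (kY X s h) n (Hstep \<nu>)) PiY"
proof -
  define \<rho> where "\<rho> = kiter X (kX Y s h) n \<nu>"
  have \<rho>: "prob_on X \<rho>"
    unfolding \<rho>_def using \<nu> by (intro prob_on_kiter prob_on_kstep_X)
  have PiY: "prob_on Y PiY" "PiY = Hstep (Sstep PiY)"
    using assms(2) kstep_Y[of PiY] by (simp_all add: harris_ergodic_def prob_on_def)
  have "tv (kiter X (kX Y s h) (Suc n) \<nu>) PiX = tv (Sstep (Hstep \<rho>)) (Sstep (Hstep (Sstep PiY)))"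
    using invariant_X_eq_Sstep[OF assms(1,2)] PiY(2) \<rho> by (simp add: \<rho>_def kiter_Suc kstep_X)
  also have "\<dots> \<le> tv (Hstep \<rho>) (Hstep (Sstep PiY))"
    using \<rho> PiY(1) by (intro tv_Sstep_Hstep_le prob_on_Sstep)
  also have "\<dots> = tv (kiter Y (kY X s h) n (Hstep \<nu>)) PiY"
    using PiY(2) \<nu> by (simp add: \<rho>_def kiter_Y_Hstep)
  finally show ?thesis .
qed

end

theorem proposition14:
  fixes X :: "'a::euclidean_space set" and Y :: "'b::euclidean_space set"
    and s :: "'b \<Rightarrow> 'a \<Rightarrow> real" and h :: "'a \<Rightarrow> 'b \<Rightarrow> real"
    and PiX :: "'a measure" and PiY :: "'b measure"
    and R :: "'b \<Rightarrow> nat \<Rightarrow> real"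
  assumes X: "X \<in> sets borel" and Y: "Y \<in> sets borel"
    and s_meas: "(\<lambda>(\<gamma>, x). s \<gamma> x) \<in> borel_measurable borel"
    and h_meas: "(\<lambda>(x, \<gamma>). h x \<gamma>) \<in> borel_measurable borel"
    and s_nonneg: "\<And>\<gamma> x. s \<gamma> x \<ge> 0" and h_nonneg: "\<And>x \<gamma>. h x \<gamma> \<ge> 0"
    and s_pdf: "\<And>\<gamma>. \<gamma> \<in> Y \<Longrightarrow> (\<integral>\<^sup>+ x. indicator X x * ennreal (s \<gamma> x) \<partial>lborel) = 1"
    and h_pdf: "\<And>x. x \<in> X \<Longrightarrow> (\<integral>\<^sup>+ \<gamma>. indicator Y \<gamma> * ennreal (h x \<gamma>) \<partial>lborel) = 1"
    and HX: "harris_ergodic X (kX Y s h) PiX"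
    and HY: "harris_ergodic Y (kY X s h) PiY"
    and R_pos: "\<And>\<gamma> m. \<gamma> \<in> Y \<Longrightarrow> R \<gamma> m > 0"
    and R_meas: "\<And>m. (\<lambda>\<gamma>. R \<gamma> m) \<in> borel_measurable borel"
    and R_bound: "\<And>nuY m. prob_space nuY \<Longrightarrow> sets nuY = sets borel \<Longrightarrow> measure nuY Y = 1 \<Longrightarrow>
        ennreal (tv (kiter Y (kY X s h) m nuY) PiY) \<le> (\<integral>\<^sup>+ \<gamma>. ennreal (R \<gamma> m) \<partial>nuY)"
  shows "\<And>\<nu> m. prob_space \<nu> \<Longrightarrow> sets \<nu> = sets borel \<Longrightarrow> measure \<nu> X = 1 \<Longrightarrow> m \<ge> 1 \<Longrightarrow>
        ennreal (tv (kiter X (kX Y s h) m \<nu>) PiX)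
          \<le> (\<integral>\<^sup>+ x. (\<integral>\<^sup>+ \<gamma>. indicator Y \<gamma> * ennreal (R \<gamma> (m - 1) * h x \<gamma>) \<partial>lborel) \<partial>\<nu>)"
proof -
  interpret data_augmentation X Y s h
    using X Y s_meas h_meas s_nonneg h_nonneg s_pdf h_pdf by unfold_locales
  fix \<nu> :: "'a measure" and m :: nat
  assume "prob_space \<nu>" "sets \<nu> = sets borel" "measure \<nu> X = 1" and "m \<ge> 1"
  then have \<nu>: "prob_on X \<nu>" and m: "m = Suc (m - 1)"
    by (simp_all add: prob_on_def)
  have "ennreal (tv (kiter X (kX Y s h) m \<nu>) PiX)
      \<le> ennreal (tv (kiter Y (kY X s h) (m - 1) (Hstep \<nu>)) PiY)"
    using tv_kiter_X_le_tv_kiter_Y[OF HX HY \<nu>] m by (metis ennreal_leI)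
  also have "\<dots> \<le> (\<integral>\<^sup>+ \<gamma>. ennreal (R \<gamma> (m - 1)) \<partial>Hstep \<nu>)"
    using prob_on_Hstep[OF \<nu>] by (intro R_bound) (simp_all add: prob_on_def)
  also have "\<dots> = (\<integral>\<^sup>+ x. (\<integral>\<^sup>+ \<gamma>. indicator Y \<gamma> * ennreal (h x \<gamma>) * ennreal (R \<gamma> (m - 1)) \<partial>lborel)
      \<partial>\<nu>)"
    using R_meas
    by (intro nn_integral_kapply) (simp_all add: sets_prob_on[OF \<nu>] prob_on_sigma_finite[OF \<nu>])
  also have "\<dots> = (\<integral>\<^sup>+ x. (\<integral>\<^sup>+ \<gamma>. indicator Y \<gamma> * ennreal (R \<gamma> (m - 1) * h x \<gamma>) \<partial>lborel) \<partial>\<nu>)"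
    using R_pos
    by (intro nn_integral_cong)
      (simp add: ennreal_mult less_imp_le h_nonneg mult.commute split: split_indicator)
  finally show "ennreal (tv (kiter X (kX Y s h) m \<nu>) PiX)
    \<le> (\<integral>\<^sup>+ x. (\<integral>\<^sup>+ \<gamma>. indicator Y \<gamma> * ennreal (R \<gamma> (m - 1) * h x \<gamma>) \<partial>lborel) \<partial>\<nu>)" .
qed

end
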